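(* Let $m\ge2$, $d\ge1$, $\sigma$ an invertible real $m\times m$ matrix and $A_1,\dots,A_d$ real $m\times m$ matrices, $G_l:=A_l\sigma-\sigma^*A_l^*$, and assume the Hörmander condition: there is $\lambda>0$ with $\sum_{i,j=1}^m|\sum_{l=1}^d(G_l)_{ij}a_l|^2\ge\lambda|a|^2$ for all $a\in\mathbb{R}^d$. Then there are constants $c_1(G),c_2(G)>0$ depending only on $G_1,\dots,G_d$ such that for all $f\in C^3(\mathbb{R}^{m+d})$ and $r>0$, $$\Gamma_2(f)+r\,\Gamma_2^Z(f)\ge\frac{(Lf)^2}{m}+\frac{c_2(G)\,\Gamma^Z(f)}{4}-\frac{c_1(G)}{r}\Gamma(f).$$
   Context: On $\mathbb{R}^{m+d}$ with coordinates $(x,y)$: $X_i=\sum_{k=1}^m\sigma_{ki}\partial_{x_k}+\sum_{l=1}^d(A_lx)_i\partial_{y_l}$ ($1\le i\le m$), $L=\frac12\sum_{i=1}^mX_i^2$, $\Gamma(f,g)=\frac12\sum_{i=1}^m(X_if)(X_ig)$, $\Gamma^Z(f,g)=\frac12\sum_{l=1}^d(\partial_{y_l}f)(\partial_{y_l}g)$, $\Gamma(f)=\Gamma(f,f)$, $\Gamma^Z(f)=\Gamma^Z(f,f)$, $\Gamma_2(f)=\frac12L\Gamma(f,f)-\Gamma(f,Lf)$, $\Gamma_2^Z(f)=\frac12L\Gamma^Z(f,f)-\Gamma^Z(f,Lf)$. *)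

theory Defs
  imports "HOL-Analysis.Analysis"
begin

text \<open>Points of R^(m+d) are pairs (x,y) with x in R^m, y in R^d.
  Index types 'm, 'd are finite types of cardinality m and d.\<close>

definition dx :: "'m::finite \<Rightarrow> ((real^'m) \<times> (real^'d) \<Rightarrow> real) \<Rightarrow> (real^'m) \<times> (real^'d) \<Rightarrow> real" where
  "dx k f p = frechet_derivative f (at p) (axis k 1, 0)"

definition dy :: "'d::finite \<Rightarrow> ((real^'m::finite) \<times> (real^'d) \<Rightarrow> real) \<Rightarrow> (real^'m) \<times> (real^'d) \<Rightarrow> real" where
  "dy l f p = frechet_derivative f (at p) (0, axis l 1)"

definition Xf :: "real^'m^'m \<Rightarrow> ('d \<Rightarrow> real^'m^'m) \<Rightarrow> 'm::finite
    \<Rightarrow> ((real^'m) \<times> (real^'d::finite) \<Rightarrow> real) \<Rightarrow> (real^'m) \<times> (real^'d) \<Rightarrow> real" where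
  "Xf \<sigma> A i f p = (\<Sum>k\<in>UNIV. \<sigma>$k$i * dx k f p) + (\<Sum>l\<in>UNIV. (A l *v fst p)$i * dy l f p)"

definition Lop :: "real^'m^'m \<Rightarrow> ('d \<Rightarrow> real^'m^'m)
    \<Rightarrow> ((real^'m::finite) \<times> (real^'d::finite) \<Rightarrow> real) \<Rightarrow> (real^'m) \<times> (real^'d) \<Rightarrow> real" where
  "Lop \<sigma> A f p = (1/2) * (\<Sum>i\<in>UNIV. Xf \<sigma> A i (Xf \<sigma> A i f) p)"

definition Gam :: "real^'m^'m \<Rightarrow> ('d \<Rightarrow> real^'m^'m)
    \<Rightarrow> ((real^'m::finite) \<times> (real^'d::finite) \<Rightarrow> real) \<Rightarrow> ((real^'m) \<times> (real^'d) \<Rightarrow> real) \<Rightarrow> (real^'m) \<times> (real^'d) \<Rightarrow> real" where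
  "Gam \<sigma> A f g p = (1/2) * (\<Sum>i\<in>UNIV. Xf \<sigma> A i f p * Xf \<sigma> A i g p)"

definition GamZ :: "((real^'m::finite) \<times> (real^'d::finite) \<Rightarrow> real) \<Rightarrow> ((real^'m) \<times> (real^'d) \<Rightarrow> real) \<Rightarrow> (real^'m) \<times> (real^'d) \<Rightarrow> real" where
  "GamZ f g p = (1/2) * (\<Sum>l\<in>UNIV. dy l f p * dy l g p)"

definition Gam2 :: "real^'m^'m \<Rightarrow> ('d \<Rightarrow> real^'m^'m)
    \<Rightarrow> ((real^'m::finite) \<times> (real^'d::finite) \<Rightarrow> real) \<Rightarrow> (real^'m) \<times> (real^'d) \<Rightarrow> real" where
  "Gam2 \<sigma> A f p = (1/2) * Lop \<sigma> A (Gam \<sigma> A f f) p - Gam \<sigma> A f (Lop \<sigma> A f) p"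

definition Gam2Z :: "real^'m^'m \<Rightarrow> ('d \<Rightarrow> real^'m^'m)
    \<Rightarrow> ((real^'m::finite) \<times> (real^'d::finite) \<Rightarrow> real) \<Rightarrow> (real^'m) \<times> (real^'d) \<Rightarrow> real" where
  "Gam2Z \<sigma> A f p = (1/2) * Lop \<sigma> A (GamZ f f) p - GamZ f (Lop \<sigma> A f) p"

fun Ck :: "nat \<Rightarrow> ('a::euclidean_space \<Rightarrow> real) \<Rightarrow> bool" where
  "Ck 0 f = continuous_on UNIV f"
| "Ck (Suc k) f = (continuous_on UNIV f \<and> f differentiable_on UNIV \<and>
      (\<forall>b\<in>Basis. Ck k (\<lambda>p. frechet_derivative f (at p) b)))"

definition Gmat :: "real^'m^'m \<Rightarrow> ('d \<Rightarrow> real^'m^'m) \<Rightarrow> 'd \<Rightarrow> real^'m^'m" where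
  "Gmat \<sigma> A l = A l ** \<sigma> - transpose \<sigma> ** transpose (A l)"

definition hoermander :: "('d::finite \<Rightarrow> real^'m::finite^'m) \<Rightarrow> bool" where
  "hoermander G \<longleftrightarrow> (\<exists>lam>0. \<forall>a::real^'d.
     (\<Sum>i\<in>UNIV. \<Sum>j\<in>UNIV. \<bar>\<Sum>l\<in>UNIV. G l $ i $ j * a $ l\<bar>^2) \<ge> lam * (norm a)^2)"

end

theory Submission
  imports Defs
begin

text \<open>By the Leibniz rule, \<open>4\<Gamma>\<^sub>2(f) = \<Sum>\<^sub>i\<^sub>j (X\<^sub>jX\<^sub>if)\<^sup>2 + \<Sum>\<^sub>i\<^sub>j X\<^sub>if (X\<^sub>j\<^sup>2X\<^sub>i - X\<^sub>iX\<^sub>j\<^sup>2)f\<close> and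
  \<open>4\<Gamma>\<^sub>2\<^sup>Z(f) = \<Sum>\<^sub>j\<^sub>l (X\<^sub>j\<partial>\<^sub>y\<^sub>lf)\<^sup>2\<close>. Since the coefficients of the \<open>X\<^sub>i\<close> are affine, the commutator
  \<open>X\<^sub>jX\<^sub>i - X\<^sub>iX\<^sub>j = \<Sum>\<^sub>l (G\<^sub>l)\<^sub>i\<^sub>j \<partial>\<^sub>y\<^sub>l\<close> is a vertical field with constant coefficients, which
  commutes with every \<open>X\<^sub>k\<close>. Hence the third-order terms equal
  \<open>2\<Sum> (G\<^sub>l)\<^sub>i\<^sub>j X\<^sub>if X\<^sub>j\<partial>\<^sub>y\<^sub>lf\<close>, and Young's inequality absorbs them into \<open>r\<Gamma>\<^sub>2\<^sup>Z(f)\<close> at the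
  price of \<open>\<Gamma>(f)/r\<close>. In the square of the horizontal Hessian \<open>X\<^sub>jX\<^sub>if\<close>, the diagonal gives
  \<open>(Lf)\<^sup>2/m\<close> by Cauchy-Schwarz and the antisymmetric part is the commutator, which the
  Hoermander condition bounds below by a multiple of \<open>\<Gamma>\<^sup>Z(f)\<close>.\<close>

definition dirderiv :: "'a::euclidean_space \<Rightarrow> ('a \<Rightarrow> real) \<Rightarrow> 'a \<Rightarrow> real" where
  "dirderiv u g = (\<lambda>p. frechet_derivative g (at p) u)"

lemma dirderiv_has_derivative:
  "g differentiable (at q) \<Longrightarrow> (g has_derivative (\<lambda>h. dirderiv h g q)) (at q)"
  unfolding dirderiv_def using frechet_derivative_works by metis

lemma has_derivative_imp_dirderiv: "(g has_derivative g') (at q) \<Longrightarrow> dirderiv h g q = g' h"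
  unfolding dirderiv_def using frechet_derivative_at by metis

lemma linear_dirderiv: "g differentiable (at q) \<Longrightarrow> linear (\<lambda>h. dirderiv h g q)"
  unfolding dirderiv_def using linear_frechet_derivative by metis

lemma dirderiv_zero: "g differentiable (at q) \<Longrightarrow> dirderiv 0 g q = 0"
  using linear_0[OF linear_dirderiv] by blast

lemma dirderiv_basis_expansion:
  assumes "g differentiable (at q)"
  shows "dirderiv v g q = (\<Sum>b\<in>Basis. (v \<bullet> b) * dirderiv b g q)"
proof -
  interpret linear "\<lambda>h. dirderiv h g q" using linear_dirderiv[OF assms] .
  have "dirderiv v g q = dirderiv (\<Sum>b\<in>Basis. (v \<bullet> b) *\<^sub>R b) g q"
    by (simp add: euclidean_representation)
  also have "\<dots> = (\<Sum>b\<in>Basis. (v \<bullet> b) * dirderiv b g q)" by (simp add: sum scale)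
  finally show ?thesis .
qed

lemma dirderiv_add:
  assumes "f differentiable (at p)" "g differentiable (at p)"
  shows "dirderiv k (\<lambda>q. f q + g q) p = dirderiv k f p + dirderiv k g p"
  using assms by (intro has_derivative_imp_dirderiv has_derivative_add dirderiv_has_derivative)

lemma dirderiv_mult:
  assumes "f differentiable (at p)" "g differentiable (at p)"
  shows "dirderiv k (\<lambda>q. f q * g q) p = f p * dirderiv k g p + dirderiv k f p * g p"
  using assms by (intro has_derivative_imp_dirderiv has_derivative_mult dirderiv_has_derivative)

lemma dirderiv_cmult:
  assumes "f differentiable (at p)"
  shows "dirderiv k (\<lambda>q. c * f q) p = c * dirderiv k f p"
  using assms by (intro has_derivative_imp_dirderiv has_derivative_mult_right dirderiv_has_derivative)

lemma dirderiv_sum: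
  assumes "\<And>i. i \<in> S \<Longrightarrow> f i differentiable (at p)"
  shows "dirderiv k (\<lambda>q. \<Sum>i\<in>S. f i q) p = (\<Sum>i\<in>S. dirderiv k (f i) p)"
  using has_derivative_imp_dirderiv[OF has_derivative_sum[of S f "\<lambda>i h. dirderiv h (f i) p",
        OF dirderiv_has_derivative[OF assms]]]
  by simp

section \<open>Symmetry of second derivatives\<close>

lemma has_real_derivative_along_line:
  assumes "\<forall>q. h differentiable (at q)"
  shows "((\<lambda>s. h (a + s *\<^sub>R b)) has_real_derivative dirderiv b h (a + s *\<^sub>R b)) (at s)"
proof -
  interpret linear "\<lambda>k. dirderiv k h (a + s *\<^sub>R b)" using linear_dirderiv assms by blast
  have line: "((\<lambda>s. a + s *\<^sub>R b) has_derivative (\<lambda>ds. ds *\<^sub>R b)) (at s)"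
    by (auto intro!: derivative_eq_intros)
  have "(h has_derivative (\<lambda>k. dirderiv k h (a + s *\<^sub>R b))) (at (a + s *\<^sub>R b))"
    using dirderiv_has_derivative assms by blast
  from diff_chain_at[OF line this]
  have "((\<lambda>s. h (a + s *\<^sub>R b)) has_derivative (\<lambda>ds. dirderiv b h (a + s *\<^sub>R b) * ds)) (at s)"
    by (simp add: o_def scale mult.commute)
  then show ?thesis
    unfolding has_field_derivative_def .
qed

lemma second_difference_mvt:
  assumes g: "\<forall>q. g differentiable (at q)" and gu: "\<forall>q. dirderiv u g differentiable (at q)"
    and t: "t > 0"
  shows "\<exists>\<xi> \<eta>. 0 < \<xi> \<and> \<xi> < t \<and> 0 < \<eta> \<and> \<eta> < t \<and>
     g (p + t *\<^sub>R v + t *\<^sub>R u) - g (p + t *\<^sub>R u) - g (p + t *\<^sub>R v) + g p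
       = t\<^sup>2 * dirderiv v (dirderiv u g) (p + \<xi> *\<^sub>R u + \<eta> *\<^sub>R v)"
proof -
  define \<phi> where "\<phi> s = g ((p + t *\<^sub>R v) + s *\<^sub>R u) - g (p + s *\<^sub>R u)" for s
  have "DERIV \<phi> s :> dirderiv u g ((p + t *\<^sub>R v) + s *\<^sub>R u) - dirderiv u g (p + s *\<^sub>R u)" for s
    unfolding \<phi>_def by (intro DERIV_diff has_real_derivative_along_line g)
  from MVT2[OF t this] obtain \<xi> where xi: "0 < \<xi>" "\<xi> < t"
    "\<phi> t - \<phi> 0 = (t - 0) * (dirderiv u g ((p + t *\<^sub>R v) + \<xi> *\<^sub>R u) - dirderiv u g (p + \<xi> *\<^sub>R u))"
    by blast
  define \<psi> where "\<psi> s = dirderiv u g ((p + \<xi> *\<^sub>R u) + s *\<^sub>R v)" for s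
  have "DERIV \<psi> s :> dirderiv v (dirderiv u g) ((p + \<xi> *\<^sub>R u) + s *\<^sub>R v)" for s
    unfolding \<psi>_def by (intro has_real_derivative_along_line gu)
  from MVT2[OF t this] obtain \<eta> where eta: "0 < \<eta>" "\<eta> < t"
    "\<psi> t - \<psi> 0 = (t - 0) * dirderiv v (dirderiv u g) ((p + \<xi> *\<^sub>R u) + \<eta> *\<^sub>R v)"
    by blast
  have "\<phi> t - \<phi> 0 = g (p + t *\<^sub>R v + t *\<^sub>R u) - g (p + t *\<^sub>R u) - g (p + t *\<^sub>R v) + g p"
    unfolding \<phi>_def by simp
  then have "g (p + t *\<^sub>R v + t *\<^sub>R u) - g (p + t *\<^sub>R u) - g (p + t *\<^sub>R v) + g p
      = t * (dirderiv u g ((p + t *\<^sub>R v) + \<xi> *\<^sub>R u) - dirderiv u g (p + \<xi> *\<^sub>R u))"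
    using xi(3) by simp
  also have "dirderiv u g ((p + t *\<^sub>R v) + \<xi> *\<^sub>R u) - dirderiv u g (p + \<xi> *\<^sub>R u) = \<psi> t - \<psi> 0"
    unfolding \<psi>_def by (simp add: algebra_simps)
  also have "t * (\<psi> t - \<psi> 0) = t\<^sup>2 * dirderiv v (dirderiv u g) (p + \<xi> *\<^sub>R u + \<eta> *\<^sub>R v)"
    using eta(3) by (simp add: power2_eq_square)
  finally show ?thesis
    using xi eta by blast
qed

lemma continuous_at_eq_of_close_values:
  fixes F H :: "'a::metric_space \<Rightarrow> real"
  assumes F: "continuous (at p) F" and H: "continuous (at p) H"
    and close: "\<And>e. e > 0 \<Longrightarrow> \<exists>q1 q2. dist q1 p < e \<and> dist q2 p < e \<and> F q1 = H q2"
  shows "F p = H p"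
proof (rule ccontr)
  assume "F p \<noteq> H p"
  then have e: "\<bar>F p - H p\<bar> / 2 > 0" by simp
  obtain d1 where d1: "d1 > 0" "\<And>q. dist q p < d1 \<Longrightarrow> \<bar>F q - F p\<bar> < \<bar>F p - H p\<bar> / 2"
    using F e unfolding continuous_at_eps_delta dist_real_def by blast
  obtain d2 where d2: "d2 > 0" "\<And>q. dist q p < d2 \<Longrightarrow> \<bar>H q - H p\<bar> < \<bar>F p - H p\<bar> / 2"
    using H e unfolding continuous_at_eps_delta dist_real_def by blast
  obtain q1 q2 where "dist q1 p < min d1 d2" "dist q2 p < min d1 d2" and eq: "F q1 = H q2"
    using close[of "min d1 d2"] d1 d2 by auto
  then have "\<bar>F q1 - F p\<bar> < \<bar>F p - H p\<bar> / 2" "\<bar>H q2 - H p\<bar> < \<bar>F p - H p\<bar> / 2"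
    using d1(2)[of q1] d2(2)[of q2] by simp_all
  with eq show False by (auto simp: abs_if split: if_splits)
qed

text \<open>Schwarz's theorem on the symmetry of second derivatives, via the second-difference
  quotient: both mixed derivatives are values of the same second difference at nearby points.\<close>

lemma dirderiv_commute_continuous:
  assumes g: "\<forall>q. g differentiable (at q)"
    and gu: "\<forall>q. dirderiv u g differentiable (at q)" and gv: "\<forall>q. dirderiv v g differentiable (at q)"
    and cuv: "continuous_on UNIV (dirderiv v (dirderiv u g))"
    and cvu: "continuous_on UNIV (dirderiv u (dirderiv v g))"
  shows "dirderiv v (dirderiv u g) p = dirderiv u (dirderiv v g) p"
proof (rule continuous_at_eq_of_close_values[where F = "dirderiv v (dirderiv u g)"
      and H = "dirderiv u (dirderiv v g)"])
  show "continuous (at p) (dirderiv v (dirderiv u g))" "continuous (at p) (dirderiv u (dirderiv v g))"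
    using cuv cvu by (simp_all add: continuous_on_eq_continuous_at)
  fix e :: real
  assume e: "e > 0"
  define t where "t = e / (norm u + norm v + 1)"
  have denom: "norm u + norm v + 1 > 0" by (simp add: add_nonneg_pos)
  with e have t: "t > 0" unfolding t_def by simp
  have near: "dist (p + a *\<^sub>R u + b *\<^sub>R v) p < e" if "0 < a" "a < t" "0 < b" "b < t" for a b
  proof -
    have "dist (p + a *\<^sub>R u + b *\<^sub>R v) p \<le> a * norm u + b * norm v"
      using norm_triangle_ineq[of "a *\<^sub>R u" "b *\<^sub>R v"] that by (simp add: dist_norm)
    also have "\<dots> \<le> t * (norm u + norm v)"
      using that by (simp add: distrib_left add_mono mult_right_mono)
    also have "\<dots> < t * (norm u + norm v + 1)" using t by simp
    also have "\<dots> = e" using denom unfolding t_def by simp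
    finally show ?thesis .
  qed
  obtain x1 y1 where xy1: "0 < x1" "x1 < t" "0 < y1" "y1 < t"
    "g (p + t *\<^sub>R v + t *\<^sub>R u) - g (p + t *\<^sub>R u) - g (p + t *\<^sub>R v) + g p
       = t\<^sup>2 * dirderiv v (dirderiv u g) (p + x1 *\<^sub>R u + y1 *\<^sub>R v)"
    using second_difference_mvt[OF g gu t] by blast
  obtain x2 y2 where xy2: "0 < x2" "x2 < t" "0 < y2" "y2 < t"
    "g (p + t *\<^sub>R u + t *\<^sub>R v) - g (p + t *\<^sub>R v) - g (p + t *\<^sub>R u) + g p
       = t\<^sup>2 * dirderiv u (dirderiv v g) (p + x2 *\<^sub>R v + y2 *\<^sub>R u)"
    using second_difference_mvt[OF g gv t] by blast
  have "dirderiv v (dirderiv u g) (p + x1 *\<^sub>R u + y1 *\<^sub>R v)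
      = dirderiv u (dirderiv v g) (p + y2 *\<^sub>R u + x2 *\<^sub>R v)"
    using xy1(5) xy2(5) t by (simp add: algebra_simps)
  then show "\<exists>q1 q2. dist q1 p < e \<and> dist q2 p < e
      \<and> dirderiv v (dirderiv u g) q1 = dirderiv u (dirderiv v g) q2"
    using near xy1(1-4) xy2(1-4) by blast
qed

lemma has_derivative_dirderiv:
  assumes u: "\<forall>q. u differentiable (at q)" and ub: "\<forall>b\<in>Basis. dirderiv b u differentiable (at p)"
  shows "(dirderiv a u has_derivative (\<lambda>h. \<Sum>b\<in>Basis. (a \<bullet> b) * dirderiv h (dirderiv b u) p)) (at p)"
proof -
  have "dirderiv a u = (\<lambda>q. \<Sum>b\<in>Basis. (a \<bullet> b) * dirderiv b u q)"
    using dirderiv_basis_expansion u by blast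
  then show ?thesis
    by (simp, intro has_derivative_sum has_derivative_mult_right dirderiv_has_derivative)
      (use ub in auto)
qed

lemma dirderiv_dirderiv_expansion:
  assumes "\<forall>q. u differentiable (at q)" "\<forall>b\<in>Basis. dirderiv b u differentiable (at p)"
  shows "dirderiv h (dirderiv a u) p = (\<Sum>b\<in>Basis. (a \<bullet> b) * dirderiv h (dirderiv b u) p)"
  using has_derivative_imp_dirderiv[OF has_derivative_dirderiv[OF assms]] .

lemma differentiable_dirderiv:
  assumes "\<forall>q. u differentiable (at q)" "\<forall>b\<in>Basis. dirderiv b u differentiable (at p)"
  shows "dirderiv a u differentiable (at p)"
  using has_derivative_dirderiv[OF assms] unfolding differentiable_def by blast

lemma dirderiv_commute_of_basis:
  assumes u: "\<forall>q. u differentiable (at q)"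
    and ub: "\<forall>b\<in>Basis. \<forall>q. dirderiv b u differentiable (at q)"
    and s: "\<forall>b\<in>Basis. \<forall>c\<in>Basis. dirderiv c (dirderiv b u) p = dirderiv b (dirderiv c u) p"
  shows "dirderiv y (dirderiv x u) p = dirderiv x (dirderiv y u) p"
proof -
  have "dirderiv y (dirderiv x u) p = (\<Sum>b\<in>Basis. (x \<bullet> b) * dirderiv y (dirderiv b u) p)"
    using dirderiv_dirderiv_expansion[of u p y x] u ub by simp
  also have "\<dots> = (\<Sum>b\<in>Basis. \<Sum>c\<in>Basis. (x \<bullet> b) * (y \<bullet> c) * dirderiv c (dirderiv b u) p)"
    using ub by (simp add: dirderiv_basis_expansion sum_distrib_left mult.assoc)
  also have "\<dots> = (\<Sum>c\<in>Basis. \<Sum>b\<in>Basis. (y \<bullet> c) * ((x \<bullet> b) * dirderiv b (dirderiv c u) p))"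
    using s by (subst sum.swap) (simp add: mult_ac)
  also have "\<dots> = (\<Sum>c\<in>Basis. (y \<bullet> c) * dirderiv x (dirderiv c u) p)"
    using ub by (simp add: dirderiv_basis_expansion sum_distrib_left)
  also have "\<dots> = dirderiv x (dirderiv y u) p"
    using dirderiv_dirderiv_expansion[of u p x y] u ub by simp
  finally show ?thesis .
qed

definition twice_diff_sym :: "('a::euclidean_space \<Rightarrow> real) \<Rightarrow> bool" where
  "twice_diff_sym u \<longleftrightarrow> (\<forall>q. u differentiable (at q))
     \<and> (\<forall>b\<in>Basis. \<forall>q. dirderiv b u differentiable (at q))
     \<and> (\<forall>p x y. dirderiv y (dirderiv x u) p = dirderiv x (dirderiv y u) p)"

lemma twice_diff_sym_differentiable: "twice_diff_sym u \<Longrightarrow> u differentiable (at q)"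
  unfolding twice_diff_sym_def by blast

lemma twice_diff_sym_dirderiv_differentiable:
  "twice_diff_sym u \<Longrightarrow> dirderiv a u differentiable (at q)"
  unfolding twice_diff_sym_def by (intro differentiable_dirderiv) auto

lemma twice_diff_sym_commute:
  "twice_diff_sym u \<Longrightarrow> dirderiv y (dirderiv x u) p = dirderiv x (dirderiv y u) p"
  unfolding twice_diff_sym_def by blast

lemma twice_diff_sym_dirderiv:
  assumes u: "twice_diff_sym u" and ub: "\<forall>b\<in>Basis. twice_diff_sym (dirderiv b u)"
  shows "twice_diff_sym (dirderiv a u)"
proof -
  have expand: "dirderiv a u = (\<lambda>q. \<Sum>b\<in>Basis. (a \<bullet> b) * dirderiv b u q)"
    using dirderiv_basis_expansion twice_diff_sym_differentiable[OF u] by blast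
  have expand1: "dirderiv x (dirderiv a u) = (\<lambda>q. \<Sum>b\<in>Basis. (a \<bullet> b) * dirderiv x (dirderiv b u) q)"
    for x
    unfolding expand using u
    by (intro ext has_derivative_imp_dirderiv has_derivative_sum has_derivative_mult_right
        dirderiv_has_derivative twice_diff_sym_dirderiv_differentiable)
  have expand2: "dirderiv y (dirderiv x (dirderiv a u)) p
      = (\<Sum>b\<in>Basis. (a \<bullet> b) * dirderiv y (dirderiv x (dirderiv b u)) p)" for x y p
    unfolding expand1 using ub
    by (intro has_derivative_imp_dirderiv has_derivative_sum has_derivative_mult_right
        dirderiv_has_derivative twice_diff_sym_dirderiv_differentiable) auto
  show ?thesis unfolding twice_diff_sym_def
  proof (intro conjI allI ballI)
    show "dirderiv a u differentiable (at q)" for q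
      using twice_diff_sym_dirderiv_differentiable[OF u] .
  next
    fix b :: 'a and q assume "b \<in> Basis"
    moreover have "dirderiv b (dirderiv a u) = dirderiv a (dirderiv b u)"
      using twice_diff_sym_commute[OF u] by blast
    ultimately show "dirderiv b (dirderiv a u) differentiable (at q)"
      using twice_diff_sym_dirderiv_differentiable ub by metis
  next
    show "dirderiv y (dirderiv x (dirderiv a u)) p = dirderiv x (dirderiv y (dirderiv a u)) p"
      for p x y
      unfolding expand2 using ub twice_diff_sym_commute by (metis (no_types, lifting) sum.cong)
  qed
qed

lemma Ck_Suc_dirderiv:
  "Ck (Suc k) f \<longleftrightarrow> continuous_on UNIV f \<and> (\<forall>q. f differentiable (at q))
     \<and> (\<forall>b\<in>Basis. Ck k (dirderiv b f))"
  by (simp add: dirderiv_def differentiable_on_def)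

lemma Ck_imp_continuous: "Ck k f \<Longrightarrow> continuous_on UNIV f"
  by (cases k) auto

lemma Ck2_imp_twice_diff_sym:
  assumes "Ck (Suc (Suc k)) f"
  shows "twice_diff_sym f"
proof -
  have f: "\<forall>q. f differentiable (at q)" and fb: "\<forall>b\<in>Basis. Ck (Suc k) (dirderiv b f)"
    using assms Ck_Suc_dirderiv by blast+
  then have fb': "\<forall>b\<in>Basis. \<forall>q. dirderiv b f differentiable (at q)"
    and fbc: "\<forall>b\<in>Basis. \<forall>c\<in>Basis. continuous_on UNIV (dirderiv c (dirderiv b f))"
    using Ck_Suc_dirderiv Ck_imp_continuous by blast+
  have "\<forall>b\<in>Basis. \<forall>c\<in>Basis. dirderiv c (dirderiv b f) p = dirderiv b (dirderiv c f) p" for p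
    using dirderiv_commute_continuous f fb' fbc by blast
  then show ?thesis
    unfolding twice_diff_sym_def using f fb' dirderiv_commute_of_basis[OF f fb'] by blast
qed

lemma Ck3_imp_twice_diff_sym:
  assumes "Ck 3 f"
  shows "twice_diff_sym f" "\<forall>b\<in>Basis. twice_diff_sym (dirderiv b f)"
proof -
  have f: "Ck (Suc (Suc (Suc 0))) f" using assms by (simp add: numeral_3_eq_3)
  then show "twice_diff_sym f" using Ck2_imp_twice_diff_sym by blast
  show "\<forall>b\<in>Basis. twice_diff_sym (dirderiv b f)"
    using f Ck_Suc_dirderiv Ck2_imp_twice_diff_sym by blast
qed

section \<open>Vector fields with affine coefficients\<close>

definition affine_field :: "'a::euclidean_space \<Rightarrow> ('a \<Rightarrow> 'a) \<Rightarrow> ('a \<Rightarrow> real) \<Rightarrow> 'a \<Rightarrow> real"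
  where "affine_field w M u q = dirderiv (w + M q) u q"

lemma has_derivative_affine_field:
  assumes u: "twice_diff_sym u" and M: "linear M"
  shows "(affine_field w M u has_derivative
      (\<lambda>h. dirderiv h (dirderiv (w + M p) u) p + dirderiv (M h) u p)) (at p)"
proof -
  have ud: "\<forall>q. u differentiable (at q)" and ub: "\<forall>b\<in>Basis. dirderiv b u differentiable (at p)"
    using u unfolding twice_diff_sym_def by blast+
  have coeff: "((\<lambda>q. (w + M q) \<bullet> b) has_derivative (\<lambda>h. M h \<bullet> b)) (at p)" for b
  proof -
    have "((\<lambda>q. w + M q) has_derivative (\<lambda>h. 0 + M h)) (at p)"
      by (intro has_derivative_add has_derivative_const linear_imp_has_derivative M)
    then show ?thesis using has_derivative_inner_left by fastforce
  qed
  have "affine_field w M u = (\<lambda>q. \<Sum>b\<in>Basis. ((w + M q) \<bullet> b) * dirderiv b u q)"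
    unfolding affine_field_def using dirderiv_basis_expansion ud by blast
  moreover have "((\<lambda>q. \<Sum>b\<in>Basis. ((w + M q) \<bullet> b) * dirderiv b u q) has_derivative
      (\<lambda>h. \<Sum>b\<in>Basis. ((w + M p) \<bullet> b) * dirderiv h (dirderiv b u) p + (M h \<bullet> b) * dirderiv b u p))
      (at p)"
    using ub by (intro has_derivative_sum has_derivative_mult coeff dirderiv_has_derivative) auto
  moreover have "(\<Sum>b\<in>Basis. ((w + M p) \<bullet> b) * dirderiv h (dirderiv b u) p + (M h \<bullet> b) * dirderiv b u p)
      = dirderiv h (dirderiv (w + M p) u) p + dirderiv (M h) u p" for h
    using dirderiv_dirderiv_expansion[OF ud ub, of h "w + M p"] dirderiv_basis_expansion[of u p "M h"] ud
    by (simp add: sum.distrib)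
  ultimately show ?thesis by simp
qed

lemma affine_field_differentiable:
  "twice_diff_sym u \<Longrightarrow> linear M \<Longrightarrow> affine_field w M u differentiable (at q)"
  using has_derivative_affine_field unfolding differentiable_def by blast

lemma dirderiv_affine_field:
  assumes u: "twice_diff_sym u" and M: "linear M"
  shows "dirderiv h (affine_field w M u) = (\<lambda>q. affine_field w M (dirderiv h u) q + dirderiv (M h) u q)"
proof
  fix q
  have "dirderiv h (affine_field w M u) q = dirderiv h (dirderiv (w + M q) u) q + dirderiv (M h) u q"
    by (rule has_derivative_imp_dirderiv[OF has_derivative_affine_field[OF u M]])
  then show "dirderiv h (affine_field w M u) q = affine_field w M (dirderiv h u) q + dirderiv (M h) u q"
    unfolding affine_field_def using twice_diff_sym_commute[OF u] by simp
qed

lemma affine_field_affine_field: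
  assumes "twice_diff_sym u" and "linear M"
  shows "affine_field w' M' (affine_field w M u) p
    = dirderiv (w + M p) (dirderiv (w' + M' p) u) p + dirderiv (M (w' + M' p)) u p"
  using dirderiv_affine_field[OF assms, of "w' + M' p" w] by (simp add: affine_field_def)

lemma twice_diff_sym_affine_field:
  assumes u: "twice_diff_sym u" and ub: "\<forall>b\<in>Basis. twice_diff_sym (dirderiv b u)" and M: "linear M"
  shows "twice_diff_sym (affine_field w M u)"
  unfolding twice_diff_sym_def
proof (intro conjI allI ballI)
  show "affine_field w M u differentiable (at q)" for q
    using affine_field_differentiable[OF u M] .
next
  fix b :: 'a and q assume "b \<in> Basis"
  then show "dirderiv b (affine_field w M u) differentiable (at q)"
    unfolding dirderiv_affine_field[OF u M] using ub
    by (intro differentiable_add affine_field_differentiable twice_diff_sym_dirderiv_differentiable M u)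
      auto
next
  fix p x y
  let ?v = "w + M p"
  have ux: "twice_diff_sym (dirderiv x u)" and uy: "twice_diff_sym (dirderiv y u)"
    and uv: "twice_diff_sym (dirderiv ?v u)"
    using twice_diff_sym_dirderiv u ub by blast+
  have swap: "dirderiv a (dirderiv c u) = dirderiv c (dirderiv a u)" for a c
    using twice_diff_sym_commute[OF u] by blast
  have "dirderiv y (dirderiv x (affine_field w M u)) p
      = dirderiv y (affine_field w M (dirderiv x u)) p + dirderiv y (dirderiv (M x) u) p"
    unfolding dirderiv_affine_field[OF u M]
    by (intro dirderiv_add affine_field_differentiable twice_diff_sym_dirderiv_differentiable M ux u)
  also have "\<dots> = dirderiv y (dirderiv ?v (dirderiv x u)) p
      + dirderiv (M y) (dirderiv x u) p + dirderiv (M x) (dirderiv y u) p"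
    unfolding dirderiv_affine_field[OF ux M]
    using twice_diff_sym_commute[OF ux] twice_diff_sym_commute[OF u] by (simp add: affine_field_def)
  also have "dirderiv y (dirderiv ?v (dirderiv x u)) p = dirderiv x (dirderiv ?v (dirderiv y u)) p"
    using twice_diff_sym_commute[OF uv] by (simp only: swap[of ?v x] swap[of ?v y])
  also have "dirderiv x (dirderiv ?v (dirderiv y u)) p
      + dirderiv (M y) (dirderiv x u) p + dirderiv (M x) (dirderiv y u) p
      = dirderiv x (affine_field w M (dirderiv y u)) p + dirderiv x (dirderiv (M y) u) p"
    unfolding dirderiv_affine_field[OF uy M]
    using twice_diff_sym_commute[OF uy] twice_diff_sym_commute[OF u] by (simp add: affine_field_def)
  also have "\<dots> = dirderiv x (dirderiv y (affine_field w M u)) p"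
    unfolding dirderiv_affine_field[OF u M]
    by (intro dirderiv_add[symmetric] affine_field_differentiable twice_diff_sym_dirderiv_differentiable
        M uy u)
  finally show "dirderiv y (dirderiv x (affine_field w M u)) p
      = dirderiv x (dirderiv y (affine_field w M u)) p" .
qed

section \<open>The fields \<open>X\<^sub>i\<close>\<close>

definition X_const :: "real^'m^'m \<Rightarrow> 'm \<Rightarrow> (real^'m::finite) \<times> (real^'d::finite)" where
  "X_const \<sigma> i = (\<chi> k. \<sigma>$k$i, 0)"

definition X_lin :: "('d \<Rightarrow> real^'m^'m) \<Rightarrow> 'm
    \<Rightarrow> (real^'m::finite) \<times> (real^'d::finite) \<Rightarrow> (real^'m) \<times> (real^'d)" where
  "X_lin A i h = (0, \<chi> l. (A l *v fst h)$i)"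

lemma linear_X_lin: "linear (X_lin A i)"
  by (rule linearI)
    (auto simp: X_lin_def vec_eq_iff matrix_vector_right_distrib matrix_vector_mult_scaleR)

lemma X_lin_vertical: "fst h = 0 \<Longrightarrow> X_lin A i h = 0"
  by (simp add: X_lin_def zero_prod_def zero_vec_def[symmetric])

lemma fst_X_lin: "fst (X_lin A i h) = 0"
  by (simp add: X_lin_def)

lemma X_lin_X_const: "X_lin A i (X_const \<sigma> j) = (0, \<chi> l. (A l ** \<sigma>)$i$j)"
  by (simp add: X_lin_def X_const_def matrix_vector_mult_def matrix_matrix_mult_def)

lemma X_coefficient_expansion:
  "X_const \<sigma> i + X_lin A i q
     = (\<Sum>k\<in>UNIV. \<sigma>$k$i *\<^sub>R (axis k 1, 0)) + (\<Sum>l\<in>UNIV. (A l *v fst q)$i *\<^sub>R (0, axis l 1))"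
proof -
  have "c * (if P then 1 else 0) = (if P then c else 0)" for c :: real and P by simp
  then show ?thesis
    by (simp add: X_const_def X_lin_def vec_eq_iff fst_sum snd_sum axis_def prod_eq_iff)
qed

lemma Xf_eq_dirderiv:
  assumes "u differentiable (at q)"
  shows "Xf \<sigma> A i u q = dirderiv (X_const \<sigma> i + X_lin A i q) u q"
proof -
  interpret linear "\<lambda>h. dirderiv h u q" using linear_dirderiv[OF assms] .
  have "dirderiv (X_const \<sigma> i + X_lin A i q) u q
      = (\<Sum>k\<in>UNIV. \<sigma>$k$i * dirderiv (axis k 1, 0) u q)
        + (\<Sum>l\<in>UNIV. (A l *v fst q)$i * dirderiv (0, axis l 1) u q)"
    unfolding X_coefficient_expansion by (simp only: add sum scale real_scaleR_def)
  then show ?thesis unfolding Xf_def dx_def dy_def dirderiv_def by simp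
qed

lemma Xf_eq_affine_field:
  "\<forall>q. u differentiable (at q) \<Longrightarrow> Xf \<sigma> A i u = affine_field (X_const \<sigma> i) (X_lin A i) u"
  by (auto simp: fun_eq_iff affine_field_def Xf_eq_dirderiv)

lemma dy_eq_dirderiv: "dy l u = dirderiv (0, axis l 1) u"
  by (simp add: dy_def dirderiv_def fun_eq_iff)

lemma dirderiv_vertical:
  assumes "u differentiable (at q)"
  shows "dirderiv (0, v) u q = (\<Sum>l\<in>UNIV. v$l * dy l u q)"
proof -
  interpret linear "\<lambda>h. dirderiv h u q" using linear_dirderiv[OF assms] .
  have "c * (if P then 1 else 0) = (if P then c else 0)" for c :: real and P by simp
  then have "(0::real^'a, v) = (\<Sum>l\<in>UNIV. v$l *\<^sub>R (0, axis l 1))"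
    by (simp add: vec_eq_iff fst_sum snd_sum axis_def prod_eq_iff)
  then have "dirderiv (0, v) u q = dirderiv (\<Sum>l\<in>UNIV. v$l *\<^sub>R (0::real^'a, axis l 1)) u q"
    by simp
  also have "\<dots> = (\<Sum>l\<in>UNIV. v$l * dirderiv (0, axis l 1) u q)"
    by (simp only: sum scale real_scaleR_def)
  finally show ?thesis by (simp add: dy_eq_dirderiv)
qed

lemma Gmat_entry: "Gmat \<sigma> A l $ i $ j = (A l ** \<sigma>)$i$j - (A l ** \<sigma>)$j$i"
proof -
  have "transpose \<sigma> ** transpose (A l) = transpose (A l ** \<sigma>)"
    by (simp add: matrix_transpose_mul)
  then show ?thesis unfolding Gmat_def by (simp add: transpose_def)
qed

lemma Xf_differentiable: "twice_diff_sym u \<Longrightarrow> Xf \<sigma> A j u differentiable (at q)"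
  using Xf_eq_affine_field affine_field_differentiable[OF _ linear_X_lin]
    twice_diff_sym_differentiable by metis

lemma twice_diff_sym_Xf:
  "twice_diff_sym u \<Longrightarrow> \<forall>b\<in>Basis. twice_diff_sym (dirderiv b u) \<Longrightarrow> twice_diff_sym (Xf \<sigma> A j u)"
  using Xf_eq_affine_field twice_diff_sym_differentiable twice_diff_sym_affine_field[OF _ _ linear_X_lin]
  by metis

lemma twice_diff_sym_dy:
  "twice_diff_sym u \<Longrightarrow> \<forall>b\<in>Basis. twice_diff_sym (dirderiv b u) \<Longrightarrow> twice_diff_sym (dy l u)"
  unfolding dy_eq_dirderiv by (rule twice_diff_sym_dirderiv)

lemma Xf_commutator:
  assumes u: "twice_diff_sym u"
  shows "Xf \<sigma> A j (Xf \<sigma> A i u) p - Xf \<sigma> A i (Xf \<sigma> A j u) p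
    = (\<Sum>l\<in>UNIV. Gmat \<sigma> A l $ i $ j * dy l u p)"
proof -
  have ud: "\<forall>q. u differentiable (at q)" using twice_diff_sym_differentiable[OF u] by blast
  have Xd: "\<forall>q. affine_field (X_const \<sigma> k) (X_lin A k) u differentiable (at q)" for k
    using affine_field_differentiable[OF u linear_X_lin] by blast
  have lin_const: "X_lin A k (X_const \<sigma> k' + X_lin A k' p) = X_lin A k (X_const \<sigma> k')" for k k'
    by (simp add: linear_add[OF linear_X_lin] X_lin_vertical fst_X_lin)
  have "Xf \<sigma> A j (Xf \<sigma> A i u) p - Xf \<sigma> A i (Xf \<sigma> A j u) p
      = dirderiv (X_lin A i (X_const \<sigma> j)) u p - dirderiv (X_lin A j (X_const \<sigma> i)) u p"
    unfolding Xf_eq_affine_field[OF ud] Xf_eq_affine_field[OF Xd]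
      affine_field_affine_field[OF u linear_X_lin] lin_const
    using twice_diff_sym_commute[OF u] by simp
  also have "\<dots> = (\<Sum>l\<in>UNIV. Gmat \<sigma> A l $ i $ j * dy l u p)"
    unfolding X_lin_X_const dirderiv_vertical[OF ud[rule_format]] Gmat_entry
    by (simp add: sum_subtractf left_diff_distrib)
  finally show ?thesis .
qed

lemma dy_Xf:
  assumes u: "twice_diff_sym u"
  shows "dy l (Xf \<sigma> A j u) = Xf \<sigma> A j (dy l u)"
proof -
  have ud: "\<forall>q. u differentiable (at q)" using twice_diff_sym_differentiable[OF u] by blast
  have dyd: "\<forall>q. dy l u differentiable (at q)"
    unfolding dy_eq_dirderiv using twice_diff_sym_dirderiv_differentiable[OF u] by blast
  have "dy l (Xf \<sigma> A j u) = (\<lambda>q. affine_field (X_const \<sigma> j) (X_lin A j) (dy l u) q + dirderiv 0 u q)"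
    unfolding dy_eq_dirderiv Xf_eq_affine_field[OF ud] dirderiv_affine_field[OF u linear_X_lin]
    by (simp add: X_lin_vertical)
  then show ?thesis
    using ud by (simp add: dirderiv_zero Xf_eq_affine_field[OF dyd])
qed

lemma Xf_mult:
  assumes "f differentiable (at p)" "g differentiable (at p)"
  shows "Xf \<sigma> A j (\<lambda>q. f q * g q) p = f p * Xf \<sigma> A j g p + Xf \<sigma> A j f p * g p"
  using assms by (simp add: Xf_eq_dirderiv dirderiv_mult)

lemma Xf_add:
  assumes "f differentiable (at p)" "g differentiable (at p)"
  shows "Xf \<sigma> A j (\<lambda>q. f q + g q) p = Xf \<sigma> A j f p + Xf \<sigma> A j g p"
  using assms by (simp add: Xf_eq_dirderiv dirderiv_add)

lemma Xf_cmult: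
  assumes "f differentiable (at p)"
  shows "Xf \<sigma> A j (\<lambda>q. c * f q) p = c * Xf \<sigma> A j f p"
  using assms by (simp add: Xf_eq_dirderiv dirderiv_cmult)

lemma Xf_sum:
  assumes "finite S" "\<And>i. i \<in> S \<Longrightarrow> f i differentiable (at p)"
  shows "Xf \<sigma> A j (\<lambda>q. \<Sum>i\<in>S. f i q) p = (\<Sum>i\<in>S. Xf \<sigma> A j (f i) p)"
proof -
  have "(\<lambda>q. \<Sum>i\<in>S. f i q) differentiable (at p)"
    using assms by (intro differentiable_sum) auto
  then show ?thesis using assms by (simp add: Xf_eq_dirderiv dirderiv_sum)
qed

lemma dy_cmult: "f differentiable (at p) \<Longrightarrow> dy l (\<lambda>q. c * f q) p = c * dy l f p"
  unfolding dy_eq_dirderiv by (rule dirderiv_cmult)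

lemma dy_sum:
  "(\<And>i. i \<in> S \<Longrightarrow> f i differentiable (at p))
    \<Longrightarrow> dy l (\<lambda>q. \<Sum>i\<in>S. f i q) p = (\<Sum>i\<in>S. dy l (f i) p)"
  unfolding dy_eq_dirderiv by (rule dirderiv_sum)

section \<open>The operators \<open>\<Gamma>\<^sub>2\<close> and \<open>\<Gamma>\<^sub>2\<^sup>Z\<close>\<close>

lemma Xf_half_sum_squares:
  assumes I: "finite I" and u: "\<And>i. i \<in> I \<Longrightarrow> u i differentiable (at p)"
  shows "Xf \<sigma> A j (\<lambda>q. 1/2 * (\<Sum>i\<in>I. u i q * u i q)) p = (\<Sum>i\<in>I. u i p * Xf \<sigma> A j (u i) p)"
proof -
  have "(\<lambda>q. \<Sum>i\<in>I. u i q * u i q) differentiable (at p)"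
    using I u by (auto intro!: differentiable_sum differentiable_mult)
  then have "Xf \<sigma> A j (\<lambda>q. 1/2 * (\<Sum>i\<in>I. u i q * u i q)) p
      = 1/2 * Xf \<sigma> A j (\<lambda>q. \<Sum>i\<in>I. u i q * u i q) p"
    by (rule Xf_cmult)
  also have "\<dots> = 1/2 * (\<Sum>i\<in>I. u i p * Xf \<sigma> A j (u i) p + Xf \<sigma> A j (u i) p * u i p)"
    using I u by (simp add: Xf_sum Xf_mult)
  finally show ?thesis by (simp add: sum_distrib_left)
qed

lemma Lop_half_sum_squares:
  assumes I: "finite I" and u: "\<And>i q. i \<in> I \<Longrightarrow> u i differentiable (at q)"
    and Xu: "\<And>i j q. i \<in> I \<Longrightarrow> Xf \<sigma> A j (u i) differentiable (at q)"
  shows "Lop \<sigma> A (\<lambda>q. 1/2 * (\<Sum>i\<in>I. u i q * u i q)) p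
    = 1/2 * (\<Sum>j\<in>UNIV. \<Sum>i\<in>I. u i p * Xf \<sigma> A j (Xf \<sigma> A j (u i)) p + (Xf \<sigma> A j (u i) p)\<^sup>2)"
proof -
  have "Xf \<sigma> A j (\<lambda>q. 1/2 * (\<Sum>i\<in>I. u i q * u i q)) = (\<lambda>q. \<Sum>i\<in>I. u i q * Xf \<sigma> A j (u i) q)"
    for j
    using Xf_half_sum_squares[OF I] u by blast
  then show ?thesis
    unfolding Lop_def using I u Xu by (simp add: Xf_sum Xf_mult power2_eq_square)
qed

lemma Lop_eq: "Lop \<sigma> A f = (\<lambda>q. 1/2 * (\<Sum>j\<in>UNIV. Xf \<sigma> A j (Xf \<sigma> A j f) q))"
  by (simp add: Lop_def fun_eq_iff)

lemma Xf_Lop: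
  assumes "twice_diff_sym f" "\<forall>b\<in>Basis. twice_diff_sym (dirderiv b f)"
  shows "Xf \<sigma> A i (Lop \<sigma> A f) p = 1/2 * (\<Sum>j\<in>UNIV. Xf \<sigma> A i (Xf \<sigma> A j (Xf \<sigma> A j f)) p)"
proof -
  have d: "Xf \<sigma> A j (Xf \<sigma> A j f) differentiable (at q)" for j q
    using assms by (intro Xf_differentiable twice_diff_sym_Xf)
  then have "Xf \<sigma> A i (Lop \<sigma> A f) p = 1/2 * Xf \<sigma> A i (\<lambda>q. \<Sum>j\<in>UNIV. Xf \<sigma> A j (Xf \<sigma> A j f) q) p"
    unfolding Lop_eq by (intro Xf_cmult differentiable_sum) auto
  then show ?thesis using d by (simp add: Xf_sum)
qed

lemma dy_Lop:
  assumes f: "twice_diff_sym f" and fb: "\<forall>b\<in>Basis. twice_diff_sym (dirderiv b f)"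
  shows "dy l (Lop \<sigma> A f) p = 1/2 * (\<Sum>j\<in>UNIV. Xf \<sigma> A j (Xf \<sigma> A j (dy l f)) p)"
proof -
  have d: "Xf \<sigma> A j (Xf \<sigma> A j f) differentiable (at q)" for j q
    using assms by (intro Xf_differentiable twice_diff_sym_Xf)
  then have "dy l (Lop \<sigma> A f) p = 1/2 * dy l (\<lambda>q. \<Sum>j\<in>UNIV. Xf \<sigma> A j (Xf \<sigma> A j f) q) p"
    unfolding Lop_eq by (intro dy_cmult differentiable_sum) auto
  moreover have "dy l (Xf \<sigma> A j (Xf \<sigma> A j f)) = Xf \<sigma> A j (Xf \<sigma> A j (dy l f))" for j
    using dy_Xf f twice_diff_sym_Xf[OF f fb] by metis
  ultimately show ?thesis using d by (simp add: dy_sum)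
qed

lemma Gam2_eq:
  assumes f: "twice_diff_sym f" and fb: "\<forall>b\<in>Basis. twice_diff_sym (dirderiv b f)"
  shows "Gam2 \<sigma> A f p = (\<Sum>j\<in>UNIV. \<Sum>i\<in>UNIV. (Xf \<sigma> A j (Xf \<sigma> A i f) p)\<^sup>2
      + Xf \<sigma> A i f p * (Xf \<sigma> A j (Xf \<sigma> A j (Xf \<sigma> A i f)) p
                        - Xf \<sigma> A i (Xf \<sigma> A j (Xf \<sigma> A j f)) p)) / 4"
proof -
  let ?X = "Xf \<sigma> A"
  have Xf: "twice_diff_sym (?X i f)" for i using twice_diff_sym_Xf f fb by blast
  have Gam: "Gam \<sigma> A f f = (\<lambda>q. 1/2 * (\<Sum>i\<in>UNIV. ?X i f q * ?X i f q))"
    by (simp add: Gam_def fun_eq_iff)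
  have "Lop \<sigma> A (Gam \<sigma> A f f) p = 1/2 * (\<Sum>j\<in>UNIV. \<Sum>i\<in>UNIV.
      ?X i f p * ?X j (?X j (?X i f)) p + (?X j (?X i f) p)\<^sup>2)"
    unfolding Gam using Xf
    by (intro Lop_half_sum_squares) (auto intro: twice_diff_sym_differentiable Xf_differentiable)
  moreover have "Gam \<sigma> A f (Lop \<sigma> A f) p
      = 1/4 * (\<Sum>j\<in>UNIV. \<Sum>i\<in>UNIV. ?X i f p * ?X i (?X j (?X j f)) p)"
    unfolding Gam_def Xf_Lop[OF f fb]
    by (subst sum.swap) (simp add: sum_distrib_left mult_ac)
  moreover have "(\<Sum>j\<in>UNIV. \<Sum>i\<in>UNIV. (?X j (?X i f) p)\<^sup>2
      + ?X i f p * (?X j (?X j (?X i f)) p - ?X i (?X j (?X j f)) p))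
    = (\<Sum>j\<in>UNIV. \<Sum>i\<in>UNIV. ?X i f p * ?X j (?X j (?X i f)) p + (?X j (?X i f) p)\<^sup>2)
      - (\<Sum>j\<in>UNIV. \<Sum>i\<in>UNIV. ?X i f p * ?X i (?X j (?X j f)) p)"
    by (simp only: sum_subtractf[symmetric]) (simp add: algebra_simps)
  ultimately show ?thesis by (simp add: Gam2_def)
qed

lemma Gam2Z_eq:
  assumes f: "twice_diff_sym f" and fb: "\<forall>b\<in>Basis. twice_diff_sym (dirderiv b f)"
  shows "Gam2Z \<sigma> A f p = (\<Sum>j\<in>UNIV. \<Sum>l\<in>UNIV. (Xf \<sigma> A j (dy l f) p)\<^sup>2) / 4"
proof -
  let ?X = "Xf \<sigma> A"
  have dy: "twice_diff_sym (dy l f)" for l using twice_diff_sym_dy f fb by blast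
  have GamZ: "GamZ f f = (\<lambda>q. 1/2 * (\<Sum>l\<in>UNIV. dy l f q * dy l f q))"
    by (simp add: GamZ_def fun_eq_iff)
  have "Lop \<sigma> A (GamZ f f) p = 1/2 * (\<Sum>j\<in>UNIV. \<Sum>l\<in>UNIV.
      dy l f p * ?X j (?X j (dy l f)) p + (?X j (dy l f) p)\<^sup>2)"
    unfolding GamZ using dy
    by (intro Lop_half_sum_squares) (auto intro: twice_diff_sym_differentiable Xf_differentiable)
  moreover have "GamZ f (Lop \<sigma> A f) p
      = 1/4 * (\<Sum>j\<in>UNIV. \<Sum>l\<in>UNIV. dy l f p * ?X j (?X j (dy l f)) p)"
    unfolding GamZ_def dy_Lop[OF f fb]
    by (subst sum.swap) (simp add: sum_distrib_left mult_ac)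
  moreover have "(\<Sum>j\<in>UNIV. \<Sum>l\<in>UNIV. (?X j (dy l f) p)\<^sup>2)
    = (\<Sum>j\<in>UNIV. \<Sum>l\<in>UNIV. dy l f p * ?X j (?X j (dy l f)) p + (?X j (dy l f) p)\<^sup>2)
      - (\<Sum>j\<in>UNIV. \<Sum>l\<in>UNIV. dy l f p * ?X j (?X j (dy l f)) p)"
    by (simp only: sum_subtractf[symmetric]) simp
  ultimately show ?thesis by (simp add: Gam2Z_def)
qed

lemma Xf_Xf_commutator:
  assumes f: "twice_diff_sym f" and fb: "\<forall>b\<in>Basis. twice_diff_sym (dirderiv b f)"
  shows "Xf \<sigma> A j (Xf \<sigma> A j (Xf \<sigma> A i f)) p - Xf \<sigma> A i (Xf \<sigma> A j (Xf \<sigma> A j f)) p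
     = 2 * (\<Sum>l\<in>UNIV. Gmat \<sigma> A l $ i $ j * Xf \<sigma> A j (dy l f) p)"
proof -
  let ?X = "Xf \<sigma> A"
  have Xf: "twice_diff_sym (?X i f)" for i using twice_diff_sym_Xf f fb by blast
  have dy: "dy l f differentiable (at q)" for l q
    using twice_diff_sym_dy[OF f fb] twice_diff_sym_differentiable by blast
  have XXf: "?X k (?X k' f) differentiable (at q)" for k k' q
    using Xf Xf_differentiable by blast
  have "?X j (?X i f) q = ?X i (?X j f) q + (\<Sum>l\<in>UNIV. Gmat \<sigma> A l $ i $ j * dy l f q)" for q
    using Xf_commutator[OF f, of \<sigma> A j i q] by linarith
  then have "?X j (?X j (?X i f)) p
      = ?X j (\<lambda>q. ?X i (?X j f) q + (\<Sum>l\<in>UNIV. Gmat \<sigma> A l $ i $ j * dy l f q)) p"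
    by presburger
  also have "\<dots> = ?X j (?X i (?X j f)) p
      + ?X j (\<lambda>q. \<Sum>l\<in>UNIV. Gmat \<sigma> A l $ i $ j * dy l f q) p"
    using dy XXf by (intro Xf_add differentiable_sum differentiable_mult) auto
  also have "?X j (\<lambda>q. \<Sum>l\<in>UNIV. Gmat \<sigma> A l $ i $ j * dy l f q) p
      = (\<Sum>l\<in>UNIV. Gmat \<sigma> A l $ i $ j * ?X j (dy l f) p)"
    using dy by (simp add: Xf_sum Xf_cmult)
  finally have "?X j (?X j (?X i f)) p
      = ?X j (?X i (?X j f)) p + (\<Sum>l\<in>UNIV. Gmat \<sigma> A l $ i $ j * ?X j (dy l f) p)" .
  moreover have "?X j (?X i (?X j f)) p - ?X i (?X j (?X j f)) p
      = (\<Sum>l\<in>UNIV. Gmat \<sigma> A l $ i $ j * ?X j (dy l f) p)"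
    using Xf_commutator[OF Xf[of j]] dy_Xf[OF f] by simp
  ultimately show ?thesis by simp
qed

lemma sum_squares_ge_diag_antisym:
  fixes B :: "'i::finite \<Rightarrow> 'i \<Rightarrow> real"
  shows "(\<Sum>i\<in>UNIV. (B i i)\<^sup>2) + (\<Sum>i\<in>UNIV. \<Sum>j\<in>UNIV. (B i j - B j i)\<^sup>2) / 4
    \<le> (\<Sum>i\<in>UNIV. \<Sum>j\<in>UNIV. (B i j)\<^sup>2)"
proof -
  have transposed: "(\<Sum>i\<in>UNIV. \<Sum>j\<in>UNIV. (B j i)\<^sup>2) = (\<Sum>i\<in>UNIV. \<Sum>j\<in>UNIV. (B i j)\<^sup>2)"
    by (rule sum.swap)
  have parallelogram: "(\<Sum>i\<in>UNIV. \<Sum>j\<in>UNIV. (B i j + B j i)\<^sup>2) + (\<Sum>i\<in>UNIV. \<Sum>j\<in>UNIV. (B i j - B j i)\<^sup>2)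
     = 2 * (\<Sum>i\<in>UNIV. \<Sum>j\<in>UNIV. (B i j)\<^sup>2) + 2 * (\<Sum>i\<in>UNIV. \<Sum>j\<in>UNIV. (B j i)\<^sup>2)"
    by (simp add: sum.distrib[symmetric] sum_distrib_left power2_eq_square algebra_simps)
  have "4 * (\<Sum>i\<in>UNIV. (B i i)\<^sup>2) = (\<Sum>i\<in>UNIV. (B i i + B i i)\<^sup>2)"
    by (simp add: sum_distrib_left power2_eq_square algebra_simps)
  also have "\<dots> \<le> (\<Sum>i\<in>UNIV. \<Sum>j\<in>UNIV. (B i j + B j i)\<^sup>2)"
  proof (rule sum_mono)
    show "(B i i + B i i)\<^sup>2 \<le> (\<Sum>j\<in>UNIV. (B i j + B j i)\<^sup>2)" for i
      using member_le_sum[of i UNIV "\<lambda>j. (B i j + B j i)\<^sup>2"] by simp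
  qed
  finally show ?thesis using transposed parallelogram by linarith
qed

lemma sum_squares_ge_trace_antisym:
  fixes B :: "'i::finite \<Rightarrow> 'i \<Rightarrow> real"
  shows "(\<Sum>i\<in>UNIV. B i i)\<^sup>2 / real CARD('i) + (\<Sum>i\<in>UNIV. \<Sum>j\<in>UNIV. (B i j - B j i)\<^sup>2) / 4
    \<le> (\<Sum>i\<in>UNIV. \<Sum>j\<in>UNIV. (B i j)\<^sup>2)"
proof -
  have "(\<Sum>i\<in>UNIV. B i i)\<^sup>2 \<le> real CARD('i) * (\<Sum>i\<in>UNIV. (B i i)\<^sup>2)"
    using sum_squared_le_sum_of_squares[of "\<lambda>i. B i i" UNIV] by (simp add: mult.commute)
  then have "(\<Sum>i\<in>UNIV. B i i)\<^sup>2 / real CARD('i) \<le> (\<Sum>i\<in>UNIV. (B i i)\<^sup>2)"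
    by (simp add: divide_le_eq mult.commute)
  with sum_squares_ge_diag_antisym[of B] show ?thesis by linarith
qed

lemma young_product_ge:
  fixes w c r :: real
  assumes "r > 0"
  shows "- c\<^sup>2 / (4 * r) \<le> w * c / 2 + r * w\<^sup>2 / 4"
proof -
  have "0 \<le> (r * w + c)\<^sup>2 / (4 * r)" using assms by simp
  also have "\<dots> = r * w\<^sup>2 / 4 + w * c / 2 + c\<^sup>2 / (4 * r)"
    using assms by (simp add: field_simps power2_eq_square)
  finally show ?thesis by linarith
qed

lemma cross_term_ge:
  fixes a :: "'i::finite \<Rightarrow> real" and W :: "'i \<Rightarrow> 'l::finite \<Rightarrow> real"
    and G :: "'l \<Rightarrow> 'i \<Rightarrow> 'i \<Rightarrow> real"
  assumes r: "r > 0"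
  shows "- ((\<Sum>l\<in>UNIV. \<Sum>i\<in>UNIV. \<Sum>j\<in>UNIV. (G l i j)\<^sup>2) * (\<Sum>i\<in>UNIV. (a i)\<^sup>2) / (4 * r))
    \<le> (\<Sum>j\<in>UNIV. \<Sum>i\<in>UNIV. a i * (\<Sum>l\<in>UNIV. G l i j * W j l)) / 2
       + r * (\<Sum>j\<in>UNIV. \<Sum>l\<in>UNIV. (W j l)\<^sup>2) / 4"
proof -
  define c where "c j l = (\<Sum>i\<in>UNIV. a i * G l i j)" for j l
  have "(\<Sum>j\<in>UNIV. \<Sum>l\<in>UNIV. (c j l)\<^sup>2)
      \<le> (\<Sum>j\<in>UNIV. \<Sum>l\<in>UNIV. (\<Sum>i\<in>UNIV. (a i)\<^sup>2) * (\<Sum>i\<in>UNIV. (G l i j)\<^sup>2))"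
    unfolding c_def by (intro sum_mono Cauchy_Schwarz_ineq_sum)
  also have "\<dots> = (\<Sum>l\<in>UNIV. \<Sum>i\<in>UNIV. \<Sum>j\<in>UNIV. (G l i j)\<^sup>2) * (\<Sum>i\<in>UNIV. (a i)\<^sup>2)"
    by (subst sum.swap, subst (2) sum.swap) (simp add: sum_distrib_left sum_distrib_right mult.commute)
  finally have cs: "(\<Sum>j\<in>UNIV. \<Sum>l\<in>UNIV. (c j l)\<^sup>2) / (4 * r)
      \<le> (\<Sum>l\<in>UNIV. \<Sum>i\<in>UNIV. \<Sum>j\<in>UNIV. (G l i j)\<^sup>2) * (\<Sum>i\<in>UNIV. (a i)\<^sup>2) / (4 * r)"
    using r by (simp add: divide_right_mono)
  have "(\<Sum>j\<in>UNIV. \<Sum>i\<in>UNIV. a i * (\<Sum>l\<in>UNIV. G l i j * W j l))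
      = (\<Sum>j\<in>UNIV. \<Sum>i\<in>UNIV. \<Sum>l\<in>UNIV. a i * G l i j * W j l)"
    by (simp add: sum_distrib_left mult.assoc)
  also have "\<dots> = (\<Sum>j\<in>UNIV. \<Sum>l\<in>UNIV. \<Sum>i\<in>UNIV. a i * G l i j * W j l)"
    by (rule sum.cong[OF refl], rule sum.swap)
  also have "\<dots> = (\<Sum>j\<in>UNIV. \<Sum>l\<in>UNIV. W j l * c j l)"
    unfolding c_def by (simp add: sum_distrib_left mult_ac)
  finally have "(\<Sum>j\<in>UNIV. \<Sum>i\<in>UNIV. a i * (\<Sum>l\<in>UNIV. G l i j * W j l)) / 2
      + r * (\<Sum>j\<in>UNIV. \<Sum>l\<in>UNIV. (W j l)\<^sup>2) / 4
      = (\<Sum>j\<in>UNIV. \<Sum>l\<in>UNIV. W j l * c j l / 2 + r * (W j l)\<^sup>2 / 4)"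
    by (simp add: sum.distrib sum_distrib_left sum_divide_distrib)
  moreover have "(\<Sum>j\<in>UNIV. \<Sum>l\<in>UNIV. - (c j l)\<^sup>2 / (4 * r))
      \<le> (\<Sum>j\<in>UNIV. \<Sum>l\<in>UNIV. W j l * c j l / 2 + r * (W j l)\<^sup>2 / 4)"
    by (intro sum_mono young_product_ge r)
  moreover have "(\<Sum>j\<in>UNIV. \<Sum>l\<in>UNIV. - (c j l)\<^sup>2 / (4 * r))
      = - (\<Sum>j\<in>UNIV. \<Sum>l\<in>UNIV. (c j l)\<^sup>2) / (4 * r)"
    by (simp add: sum_negf sum_divide_distrib)
  ultimately show ?thesis using cs by linarith
qed

definition hoermander_bound :: "('d::finite \<Rightarrow> real^'m::finite^'m) \<Rightarrow> real \<Rightarrow> bool" where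
  "hoermander_bound G lam \<longleftrightarrow> (\<forall>a::real^'d.
     (\<Sum>i\<in>UNIV. \<Sum>j\<in>UNIV. \<bar>\<Sum>l\<in>UNIV. G l $ i $ j * a $ l\<bar>^2) \<ge> lam * (norm a)^2)"

definition hoermander_const :: "('d::finite \<Rightarrow> real^'m::finite^'m) \<Rightarrow> real" where
  "hoermander_const G = (if hoermander G then SOME lam. lam > 0 \<and> hoermander_bound G lam else 1)"

definition frobenius_sq :: "('d::finite \<Rightarrow> real^'m::finite^'m) \<Rightarrow> real" where
  "frobenius_sq G = (\<Sum>l\<in>UNIV. \<Sum>i\<in>UNIV. \<Sum>j\<in>UNIV. (G l $ i $ j)\<^sup>2)"

lemma hoermander_const_exists: "hoermander G \<Longrightarrow> \<exists>lam. lam > 0 \<and> hoermander_bound G lam"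
  by (simp add: hoermander_def hoermander_bound_def)

lemma hoermander_const_pos: "hoermander_const G > 0"
proof (cases "hoermander G")
  case True
  then show ?thesis
    using someI_ex[OF hoermander_const_exists[OF True]] by (simp add: hoermander_const_def)
qed (simp add: hoermander_const_def)

lemma hoermander_bound_hoermander_const:
  assumes "hoermander G"
  shows "hoermander_bound G (hoermander_const G)"
  using someI_ex[OF hoermander_const_exists[OF assms]] assms by (simp add: hoermander_const_def)

lemma hoermander_bound_sum:
  assumes "hoermander_bound G lam"
  shows "lam * (\<Sum>l\<in>UNIV. (z l)\<^sup>2) \<le> (\<Sum>i\<in>UNIV. \<Sum>j\<in>UNIV. (\<Sum>l\<in>UNIV. G l $ i $ j * z l)\<^sup>2)"
proof -
  have "(norm (\<chi> l. z l))\<^sup>2 = (\<Sum>l\<in>UNIV. (z l)\<^sup>2)"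
    unfolding power2_norm_eq_inner inner_vec_def by (simp add: power2_eq_square)
  then show ?thesis
    using assms[unfolded hoermander_bound_def, rule_format, of "\<chi> l. z l"] by simp
qed

lemma Gam2_lower_bound:
  fixes \<sigma> :: "real^'m::finite^'m" and A :: "'d::finite \<Rightarrow> real^'m^'m"
  assumes f3: "Ck 3 f" and r: "r > 0" and H: "hoermander_bound (Gmat \<sigma> A) lam"
  shows "(Lop \<sigma> A f p)^2 / real CARD('m) + lam / 2 * GamZ f f p / 4
      - (frobenius_sq (Gmat \<sigma> A) / 2 + 1) / r * Gam \<sigma> A f f p
    \<le> Gam2 \<sigma> A f p + r * Gam2Z \<sigma> A f p"
proof -
  have f: "twice_diff_sym f" and fb: "\<forall>b\<in>Basis. twice_diff_sym (dirderiv b f)"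
    using Ck3_imp_twice_diff_sym[OF f3] by auto
  let ?G = "\<lambda>l i j. Gmat \<sigma> A l $ i $ j"
  define B where "B i j = Xf \<sigma> A j (Xf \<sigma> A i f) p" for i j
  define a where "a i = Xf \<sigma> A i f p" for i
  define W where "W j l = Xf \<sigma> A j (dy l f) p" for j l
  define z where "z l = dy l f p" for l
  have Gam2: "Gam2 \<sigma> A f p = (\<Sum>i\<in>UNIV. \<Sum>j\<in>UNIV. (B i j)\<^sup>2) / 4
      + (\<Sum>j\<in>UNIV. \<Sum>i\<in>UNIV. a i * (\<Sum>l\<in>UNIV. ?G l i j * W j l)) / 2"
    unfolding Gam2_eq[OF f fb] Xf_Xf_commutator[OF f fb] B_def a_def W_def
    by (subst (2) sum.swap) (simp add: sum.distrib add_divide_distrib sum_divide_distrib)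
  have Gam2Z: "r * Gam2Z \<sigma> A f p = r * (\<Sum>j\<in>UNIV. \<Sum>l\<in>UNIV. (W j l)\<^sup>2) / 4"
    unfolding Gam2Z_eq[OF f fb] W_def by simp
  define T where "T = (\<Sum>i\<in>UNIV. B i i)\<^sup>2 / real CARD('m)"
  define F where "F = frobenius_sq (Gmat \<sigma> A) * (\<Sum>i\<in>UNIV. (a i)\<^sup>2) / (4 * r)"
  have Lop: "(Lop \<sigma> A f p)^2 / real CARD('m) = T / 4"
    by (simp add: T_def Lop_def B_def power2_eq_square)
  have GamZ: "lam / 2 * GamZ f f p / 4 = lam * (\<Sum>l\<in>UNIV. (z l)\<^sup>2) / 16"
    by (simp add: GamZ_def z_def power2_eq_square)
  have Gam: "F \<le> (frobenius_sq (Gmat \<sigma> A) / 2 + 1) / r * Gam \<sigma> A f f p"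
    using r by (simp add: F_def Gam_def a_def power2_eq_square field_simps sum_nonneg)
  have "B i j - B j i = (\<Sum>l\<in>UNIV. ?G l i j * z l)" for i j
    unfolding B_def z_def by (rule Xf_commutator[OF f])
  then have antisym: "lam * (\<Sum>l\<in>UNIV. (z l)\<^sup>2) \<le> (\<Sum>i\<in>UNIV. \<Sum>j\<in>UNIV. (B i j - B j i)\<^sup>2)"
    using hoermander_bound_sum[OF H] by simp
  have cross: "- F \<le> (\<Sum>j\<in>UNIV. \<Sum>i\<in>UNIV. a i * (\<Sum>l\<in>UNIV. ?G l i j * W j l)) / 2
         + r * (\<Sum>j\<in>UNIV. \<Sum>l\<in>UNIV. (W j l)\<^sup>2) / 4"
    unfolding F_def frobenius_sq_def by (rule cross_term_ge[OF r])
  show ?thesis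
    using sum_squares_ge_trace_antisym[of B, folded T_def] antisym cross Gam2 Gam2Z Lop GamZ Gam by linarith
qed

theorem lemma4p2:
  assumes "CARD('m::finite) \<ge> 2"
  shows "\<exists>c1 c2 :: ('d::finite \<Rightarrow> real^'m^'m) \<Rightarrow> real.
    (\<forall>G. c1 G > 0 \<and> c2 G > 0) \<and>
    (\<forall>(\<sigma>::real^'m^'m) (A::'d \<Rightarrow> real^'m^'m).
       invertible \<sigma> \<longrightarrow> hoermander (Gmat \<sigma> A) \<longrightarrow>
       (\<forall>(f::(real^'m) \<times> (real^'d) \<Rightarrow> real) (r::real) p.
          Ck 3 f \<longrightarrow> r > 0 \<longrightarrow>
          Gam2 \<sigma> A f p + r * Gam2Z \<sigma> A f p \<ge>
            (Lop \<sigma> A f p)^2 / real CARD('m) + c2 (Gmat \<sigma> A) * GamZ f f p / 4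
            - c1 (Gmat \<sigma> A) / r * Gam \<sigma> A f f p))"
proof (intro exI conjI allI impI)
  show "frobenius_sq G / 2 + 1 > 0" "hoermander_const G / 2 > 0" for G :: "'d \<Rightarrow> real^'m^'m"
    using hoermander_const_pos[of G] by (auto simp: frobenius_sq_def sum_nonneg add_nonneg_pos)
next
  fix \<sigma> :: "real^'m^'m" and A :: "'d \<Rightarrow> real^'m^'m" and f :: "(real^'m) \<times> (real^'d) \<Rightarrow> real"
    and r :: real and p
  assume "hoermander (Gmat \<sigma> A)" "Ck 3 f" "r > 0"
  then show "(Lop \<sigma> A f p)^2 / real CARD('m) + hoermander_const (Gmat \<sigma> A) / 2 * GamZ f f p / 4
      - (frobenius_sq (Gmat \<sigma> A) / 2 + 1) / r * Gam \<sigma> A f f p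
    \<le> Gam2 \<sigma> A f p + r * Gam2Z \<sigma> A f p"
    by (intro Gam2_lower_bound hoermander_bound_hoermander_const)
qed

end
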